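(* Let $\mathbb{F}=\mathbb{F}_{q^m}$, let $k\ge 1$, and let $(x_1,y_1),\dots,(x_r,y_r)\in\mathbb{F}\times\mathbb{F}$ be linearly independent over $\mathbb{F}_q$. Run the following procedure. Initialize $f_0(x,y)=x$, $f_1(x,y)=y$. For $i=1,\dots,r$: set $\Delta_0=f_0(x_i,y_i)$, $\Delta_1=f_1(x_i,y_i)$; if $\Delta_0=0$, replace $f_1$ by $f_1^q-\Delta_1^{q-1}f_1$; else if $\Delta_1=0$, replace $f_0$ by $f_0^q-\Delta_0^{q-1}f_0$; else, if $\deg_{1,k-1}(f_0)\le\deg_{1,k-1}(f_1)$, simultaneously replace $f_1$ by $\Delta_1 f_0-\Delta_0 f_1$ and $f_0$ by $f_0^q-\Delta_0^{q-1}f_0$; otherwise simultaneously replace $f_0$ by $\Delta_1 f_0-\Delta_0 f_1$ and $f_1$ by $f_1^q-\Delta_1^{q-1}f_1$ (in each simultaneous update, the right-hand sides use the values of $f_0,f_1$ before the update). Then the final polynomials $f_0$ and $f_1$ are, respectively, $x$-minimal and $y$-minimal with respect to the set $\{(x_i,y_i)\}_{i=1}^r$.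
   Context: A bivariate linearized polynomial over $\mathbb{F}$ is $f(x,y)=f_x(x)+f_y(y)$ with $f_x(x)=\sum_i a_i x^{q^i}$, $f_y(y)=\sum_j b_j y^{q^j}$, $a_i,b_j\in\mathbb{F}$; its monomials are $x^{[i]}=x^{q^i}$ and $y^{[j]}=y^{q^j}$. $f^q$ denotes $(f(x,y))^q$, again a bivariate linearized polynomial. If $f_x\not\equiv0$ has degree $q^{d_x(f)}$ and $f_y\not\equiv0$ has degree $q^{d_y(f)}$, the $(1,k-1)$-weighted degree is $\deg_{1,k-1}(f)=\max\{d_x(f),k-1+d_y(f)\}$ (omitting a term whose part is identically zero). Monomials are totally ordered by weight, where $x^{[i]}$ has weight $i$ and $y^{[j]}$ has weight $k-1+j$, with ties broken by declaring $x^{[i]}$ smaller than $y^{[j]}$ when their weights are equal. The leading term $\mathrm{lt}(f)$ of a nonzero $f$ is its largest monomial (with nonzero coefficient) in this order. A nonzero bivariate linearized polynomial $f$ is $x$-minimal with respect to a finite set of points $P\subset\mathbb{F}\times\mathbb{F}$ if $f$ vanishes at all points of $P$, $\mathrm{lt}(f)$ is of the form $x^{[d]}$, and no nonzero bivariate linearized polynomial $g$ vanishing on $P$ with $\mathrm{lt}(g)$ of the form $x^{[e]}$ has $\mathrm{lt}(g)$ strictly smaller than $\mathrm{lt}(f)$. $y$-minimal is defined identically with leading terms of the form $y^{[j]}$. *)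

theory Defs
  imports "HOL-Computational_Algebra.Computational_Algebra"
begin

text \<open>A linearized polynomial sum a_i X^(q^i) is represented by the ordinary
polynomial whose i-th coefficient is a_i.  A bivariate linearized polynomial
f_x(x) + f_y(y) is represented by the pair (f_x, f_y).\<close>

type_synonym 'a blin = "'a poly \<times> 'a poly"

definition eval_lin :: "nat \<Rightarrow> 'a::field poly \<Rightarrow> 'a \<Rightarrow> 'a" where
  "eval_lin q p a = (\<Sum>i\<le>degree p. coeff p i * a ^ (q ^ i))"

definition eval_blin :: "nat \<Rightarrow> 'a::field blin \<Rightarrow> 'a \<times> 'a \<Rightarrow> 'a" where
  "eval_blin q f P = eval_lin q (fst f) (fst P) + eval_lin q (snd f) (snd P)"

text \<open>q-th power of a linearized polynomial: coefficient a_i of X^[i]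
becomes a_i^q at X^[i+1].\<close>
definition frob_lin :: "nat \<Rightarrow> 'a::field poly \<Rightarrow> 'a poly" where
  "frob_lin q p = pCons 0 (map_poly (\<lambda>a. a ^ q) p)"

definition frob_blin :: "nat \<Rightarrow> 'a::field blin \<Rightarrow> 'a blin" where
  "frob_blin q f = (frob_lin q (fst f), frob_lin q (snd f))"

definition scale_blin :: "'a::field \<Rightarrow> 'a blin \<Rightarrow> 'a blin" where
  "scale_blin c f = (smult c (fst f), smult c (snd f))"

definition sub_blin :: "'a::field blin \<Rightarrow> 'a blin \<Rightarrow> 'a blin" where
  "sub_blin f g = (fst f - fst g, snd f - snd g)"

definition zero_blin :: "'a::field blin" where
  "zero_blin = (0, 0)"

text \<open>(1,k-1)-weighted degree, omitting a part that is identically zero.\<close>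
definition degw :: "nat \<Rightarrow> 'a::field blin \<Rightarrow> nat" where
  "degw k f = max (if fst f = 0 then 0 else degree (fst f))
                  (if snd f = 0 then 0 else k - 1 + degree (snd f))"

datatype monomial = MX nat | MY nat

text \<open>Monomial order: by weight, ties broken with x-monomials smaller.
Encoded injectively as 2*weight + tag.\<close>
fun mkey :: "nat \<Rightarrow> monomial \<Rightarrow> nat" where
  "mkey k (MX i) = 2 * i"
| "mkey k (MY j) = 2 * (k - 1 + j) + 1"

definition msupp :: "'a::field blin \<Rightarrow> monomial set" where
  "msupp f = {MX i | i. coeff (fst f) i \<noteq> 0} \<union> {MY j | j. coeff (snd f) j \<noteq> 0}"

definition lt :: "nat \<Rightarrow> 'a::field blin \<Rightarrow> monomial" where
  "lt k f = (THE m. m \<in> msupp f \<and> (\<forall>m'\<in>msupp f. mkey k m' \<le> mkey k m))"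

definition vanishes_on :: "nat \<Rightarrow> 'a::field blin \<Rightarrow> ('a \<times> 'a) set \<Rightarrow> bool" where
  "vanishes_on q f P \<longleftrightarrow> (\<forall>p\<in>P. eval_blin q f p = 0)"

definition x_minimal :: "nat \<Rightarrow> nat \<Rightarrow> ('a::field \<times> 'a) set \<Rightarrow> 'a blin \<Rightarrow> bool" where
  "x_minimal q k P f \<longleftrightarrow> f \<noteq> zero_blin \<and> vanishes_on q f P \<and> (\<exists>d. lt k f = MX d) \<and>
     (\<forall>g. g \<noteq> zero_blin \<and> vanishes_on q g P \<and> (\<exists>e. lt k g = MX e)
          \<longrightarrow> \<not> mkey k (lt k g) < mkey k (lt k f))"

definition y_minimal :: "nat \<Rightarrow> nat \<Rightarrow> ('a::field \<times> 'a) set \<Rightarrow> 'a blin \<Rightarrow> bool" where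
  "y_minimal q k P f \<longleftrightarrow> f \<noteq> zero_blin \<and> vanishes_on q f P \<and> (\<exists>d. lt k f = MY d) \<and>
     (\<forall>g. g \<noteq> zero_blin \<and> vanishes_on q g P \<and> (\<exists>e. lt k g = MY e)
          \<longrightarrow> \<not> mkey k (lt k g) < mkey k (lt k f))"

text \<open>F_q = fixed points of a \<mapsto> a^q; linear independence of a list of points over F_q
(a list with a repeated entry is dependent).\<close>
definition lin_indep_Fq :: "nat \<Rightarrow> ('a::field \<times> 'a) list \<Rightarrow> bool" where
  "lin_indep_Fq q pts \<longleftrightarrow>
     (\<forall>c :: nat \<Rightarrow> 'a. (\<forall>i<length pts. c i ^ q = c i) \<and>
        (\<Sum>i<length pts. c i * fst (pts ! i)) = 0 \<and>
        (\<Sum>i<length pts. c i * snd (pts ! i)) = 0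
        \<longrightarrow> (\<forall>i<length pts. c i = 0))"

definition alg_step :: "nat \<Rightarrow> nat \<Rightarrow> 'a::field blin \<times> 'a blin \<Rightarrow> 'a \<times> 'a \<Rightarrow> 'a blin \<times> 'a blin" where
  "alg_step q k fs P =
    (let f0 = fst fs; f1 = snd fs; d0 = eval_blin q f0 P; d1 = eval_blin q f1 P in
     if d0 = 0 then (f0, sub_blin (frob_blin q f1) (scale_blin (d1 ^ (q - 1)) f1))
     else if d1 = 0 then (sub_blin (frob_blin q f0) (scale_blin (d0 ^ (q - 1)) f0), f1)
     else if degw k f0 \<le> degw k f1 then
       (sub_blin (frob_blin q f0) (scale_blin (d0 ^ (q - 1)) f0),
        sub_blin (scale_blin d1 f0) (scale_blin d0 f1))
     else
       (sub_blin (scale_blin d1 f0) (scale_blin d0 f1),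
        sub_blin (frob_blin q f1) (scale_blin (d1 ^ (q - 1)) f1)))"

definition run_alg :: "nat \<Rightarrow> nat \<Rightarrow> ('a::field \<times> 'a) list \<Rightarrow> 'a blin \<times> 'a blin" where
  "run_alg q k pts = fold (\<lambda>P fs. alg_step q k fs P) pts (([:1:], 0), (0, [:1:]))"

end

theory Submission
  imports Defs
begin

text \<open>The algorithm maintains three facts about the points processed so far: \<open>f\<^sub>0\<close> is
  x-minimal, \<open>f\<^sub>1\<close> is y-minimal, and every common zero of \<open>f\<^sub>0\<close> and \<open>f\<^sub>1\<close> lies in
  the \<open>\<bbbF>\<^sub>q\<close>-span of the points.  By linear independence the next point \<open>p\<close> is not in
  that span, so \<open>\<Delta>\<^sub>0\<close> and \<open>\<Delta>\<^sub>1\<close> do not both vanish.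

  Since \<open>q\<close> is a power of the characteristic, evaluation is \<open>\<bbbF>\<^sub>q\<close>-linear in the point,
  and \<open>f\<^sup>q - \<Delta>\<^sup>q\<^sup>-\<^sup>1 f\<close> vanishes at \<open>p\<close>, has as leading monomial the shift of that of
  \<open>f\<close>, and vanishes only where \<open>f\<close> takes a value in \<open>\<bbbF>\<^sub>q \<Delta>\<close>.  The combination
  \<open>\<Delta>\<^sub>1 f\<^sub>0 - \<Delta>\<^sub>0 f\<^sub>1\<close> vanishes at \<open>p\<close> and keeps the leading monomial of the larger
  of \<open>f\<^sub>0\<close>, \<open>f\<^sub>1\<close>.  The updated \<open>f\<^sup>q - \<Delta>\<^sup>q\<^sup>-\<^sup>1 f\<close> stays minimal because every
  polynomial vanishing on the old points but not at \<open>p\<close> has leading monomial at least that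
  of \<open>f\<close>: if the other polynomial \<open>g\<close> of the pair is the larger one this is minimality, and
  if \<open>g\<close> vanishes at \<open>p\<close>, the leading monomials of \<open>g\<close>'s class can be cancelled by \<open>q\<close>-th
  powers of \<open>g\<close> without changing the value at \<open>p\<close>.\<close>

section \<open>Characteristic of a finite field\<close>

lemma of_nat_card_UNIV_eq_0: "of_nat (card (UNIV :: 'a::{finite,ring_1} set)) = (0::'a)"
proof -
  have "(\<Sum>x\<in>UNIV. x + 1) = (\<Sum>x\<in>(UNIV::'a set). x)"
    by (rule sum.reindex_bij_witness[of _ "\<lambda>x. x - 1" "\<lambda>x. x + 1"]) auto
  then show ?thesis
    by (simp add: sum.distrib)
qed

lemma CHAR_eq_if_card_prime_power:
  assumes "prime p" and "card (UNIV :: 'a::{finite,field} set) = p ^ n"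
  shows "CHAR('a) = p"
proof -
  have "prime CHAR('a)"
    by (rule prime_CHAR_semidom) (simp add: finite_imp_CHAR_pos)
  moreover have "CHAR('a) dvd p ^ n"
    using of_nat_card_UNIV_eq_0[where 'a='a] of_nat_eq_0_iff_char_dvd assms(2) by metis
  ultimately show ?thesis
    using assms(1) prime_dvd_power primes_dvd_imp_eq by blast
qed


section \<open>Evaluation\<close>

lemma power_mult_power: "(a :: 'a::monoid_mult) ^ (n * n ^ j) = (a ^ (n ^ j)) ^ n"
  by (subst mult.commute) (rule power_mult)

lemma eval_lin_eq_sum:
  assumes "degree p \<le> N"
  shows "eval_lin q p a = (\<Sum>i\<le>N. coeff p i * a ^ (q ^ i))"
  unfolding eval_lin_def
  by (rule sum.mono_neutral_left) (use assms in \<open>auto simp: coeff_eq_0\<close>)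

lemma eval_lin_diff: "eval_lin q (p - r) a = eval_lin q p a - eval_lin q r (a::'a::field)"
proof -
  let ?N = "max (degree p) (degree r)"
  have "degree (p - r) \<le> ?N"
    by (rule degree_diff_le_max)
  then show ?thesis
    using eval_lin_eq_sum[of p ?N] eval_lin_eq_sum[of r ?N]
    by (simp add: eval_lin_eq_sum[of "p - r" ?N] left_diff_distrib sum_subtractf)
qed

lemma eval_lin_smult: "eval_lin q (smult c p) a = c * eval_lin q p (a::'a::field)"
  using eval_lin_eq_sum[of "smult c p" "degree p"]
  by (simp add: eval_lin_def sum_distrib_left mult.assoc)

lemma eval_blin_sub: "eval_blin q (sub_blin f g) P = eval_blin q f P - eval_blin q g (P::'a::field \<times> 'a)"
  by (simp add: eval_blin_def sub_blin_def eval_lin_diff)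

lemma eval_blin_scale: "eval_blin q (scale_blin c f) P = c * eval_blin q f (P::'a::field \<times> 'a)"
  by (simp add: eval_blin_def scale_blin_def eval_lin_smult distrib_left)

lemma eval_zero_blin [simp]: "eval_blin q zero_blin P = (0::'a::field)"
  by (simp add: eval_blin_def zero_blin_def eval_lin_def)

lemma vanishes_on_sub:
  "vanishes_on q f S \<Longrightarrow> vanishes_on q g S \<Longrightarrow> vanishes_on q (sub_blin f g) (S::('a::field \<times> 'a) set)"
  by (simp add: vanishes_on_def eval_blin_sub)

lemma vanishes_on_scale:
  "vanishes_on q f S \<Longrightarrow> vanishes_on q (scale_blin c f) (S::('a::field \<times> 'a) set)"
  by (simp add: vanishes_on_def eval_blin_scale)

section \<open>Leading monomials\<close>

fun mcoeff :: "'a::field blin \<Rightarrow> monomial \<Rightarrow> 'a" where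
  "mcoeff f (MX i) = coeff (fst f) i"
| "mcoeff f (MY j) = coeff (snd f) j"

fun mshift :: "monomial \<Rightarrow> monomial" where
  "mshift (MX i) = MX (Suc i)"
| "mshift (MY j) = MY (Suc j)"

fun is_MX :: "monomial \<Rightarrow> bool" where
  "is_MX (MX i) = True"
| "is_MX (MY j) = False"

lemma mcoeff_sub [simp]: "mcoeff (sub_blin f g) m = mcoeff f m - mcoeff g m"
  by (cases m) (simp_all add: sub_blin_def)

lemma mcoeff_scale [simp]: "mcoeff (scale_blin c f) m = c * mcoeff f m"
  by (cases m) (simp_all add: scale_blin_def)

lemma mcoeff_zero_blin [simp]: "mcoeff zero_blin m = 0"
  by (cases m) (simp_all add: zero_blin_def)

lemma zero_blin_iff: "f = zero_blin \<longleftrightarrow> (\<forall>m. mcoeff f m = 0)"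
proof
  assume "\<forall>m. mcoeff f m = 0"
  then have "coeff (fst f) i = 0" "coeff (snd f) i = 0" for i
    using mcoeff.simps by metis+
  then show "f = zero_blin"
    by (cases f) (simp add: zero_blin_def poly_eq_iff)
qed simp

lemma msupp_eq: "msupp f = {m. mcoeff f m \<noteq> 0}"
proof (rule set_eqI)
  show "m \<in> msupp f \<longleftrightarrow> m \<in> {m. mcoeff f m \<noteq> 0}" for m
    by (cases m) (auto simp: msupp_def)
qed

lemma finite_msupp: "finite (msupp f)"
proof (rule finite_subset)
  show "msupp f \<subseteq> MX ` {..degree (fst f)} \<union> MY ` {..degree (snd f)}"
    unfolding msupp_def by (auto intro: le_degree)
qed simp

lemma mkey_inj: "mkey k m = mkey k m' \<Longrightarrow> m = m'"
  by (cases m; cases m'; simp; presburger)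

lemma mkey_mshift [simp]: "mkey k (mshift m) = mkey k m + 2"
  by (cases m) simp_all

lemma is_MX_mshift [simp]: "is_MX (mshift m) = is_MX m"
  by (cases m) simp_all

lemma mshift_pow_MX: "(mshift ^^ j) (MX i) = MX (i + j)"
  by (induction j) simp_all

lemma mshift_pow_MY: "(mshift ^^ j) (MY i) = MY (i + j)"
  by (induction j) simp_all

lemma mshift_pow_reaches:
  assumes "is_MX m = is_MX m'" and "mkey k m \<le> mkey k m'"
  obtains j where "(mshift ^^ j) m = m'"
proof (cases m; cases m')
  fix i i' assume "m = MX i" "m' = MX i'"
  then show thesis
    using assms that[of "i' - i"] by (simp add: mshift_pow_MX)
next
  fix i i' assume "m = MY i" "m' = MY i'"
  then show thesis
    using assms that[of "i' - i"] by (simp add: mshift_pow_MY)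
qed (use assms in auto)

lemma mkey_mshift_pow: "mkey k ((mshift ^^ j) m) = mkey k m + 2 * j"
  by (induction j) simp_all

lemma same_class_eq_if_mkey_less_mshift:
  assumes "is_MX m = is_MX m'" and "mkey k m \<le> mkey k m'" and "mkey k m' < mkey k (mshift m)"
  shows "m' = m"
proof -
  obtain j where "(mshift ^^ j) m = m'"
    using mshift_pow_reaches assms(1,2) by blast
  moreover from this have "j = 0"
    using assms(3) mkey_mshift_pow[of k j m] by simp
  ultimately show ?thesis
    by simp
qed

lemma lt_greatest:
  assumes "f \<noteq> zero_blin"
  shows "mcoeff f (lt k f) \<noteq> 0 \<and> (\<forall>m. mcoeff f m \<noteq> 0 \<longrightarrow> mkey k m \<le> mkey k (lt k f))"
proof -
  have "msupp f \<noteq> {}"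
    using assms by (auto simp: msupp_eq zero_blin_iff)
  then have "Max (mkey k ` msupp f) \<in> mkey k ` msupp f"
    using finite_msupp[of f] by (intro Max_in finite_imageI) auto
  then obtain m where m: "m \<in> msupp f" "mkey k m = Max (mkey k ` msupp f)"
    by auto
  then have greatest: "\<forall>m'\<in>msupp f. mkey k m' \<le> mkey k m"
    using finite_msupp[of f] by auto
  have "lt k f = m"
    unfolding lt_def
  proof (rule the_equality)
    fix m' assume "m' \<in> msupp f \<and> (\<forall>m''\<in>msupp f. mkey k m'' \<le> mkey k m')"
    then show "m' = m"
      using m greatest by (meson antisym mkey_inj)
  qed (use m greatest in blast)
  then show ?thesis
    using m greatest by (simp add: msupp_eq)
qed

lemma mcoeff_lt_neq_0: "f \<noteq> zero_blin \<Longrightarrow> mcoeff f (lt k f) \<noteq> 0"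
  using lt_greatest by blast

lemma mkey_le_lt: "f \<noteq> zero_blin \<Longrightarrow> mcoeff f m \<noteq> 0 \<Longrightarrow> mkey k m \<le> mkey k (lt k f)"
  using lt_greatest by blast

lemma lt_eqI:
  assumes "mcoeff f m \<noteq> 0" and "\<And>m'. mcoeff f m' \<noteq> 0 \<Longrightarrow> mkey k m' \<le> mkey k m"
  shows "lt k f = m"
proof -
  have "f \<noteq> zero_blin"
    using assms(1) by auto
  then show ?thesis
    using assms mcoeff_lt_neq_0 mkey_le_lt by (metis le_antisym mkey_inj)
qed

lemma lt_scale:
  assumes "c \<noteq> 0"
  shows "lt k (scale_blin c f) = lt k f"
proof (cases "f = zero_blin")
  case False
  show ?thesis
  proof (rule lt_eqI)
    show "mcoeff (scale_blin c f) (lt k f) \<noteq> 0"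
      using assms mcoeff_lt_neq_0[OF False] by simp
    show "mkey k m \<le> mkey k (lt k f)" if "mcoeff (scale_blin c f) m \<noteq> 0" for m
      using that mkey_le_lt[OF False] by simp
  qed
qed (simp add: scale_blin_def zero_blin_def)

lemma scale_blin_eq_zero_iff: "scale_blin c f = zero_blin \<longleftrightarrow> c = 0 \<or> f = zero_blin"
  by (cases f) (auto simp: scale_blin_def zero_blin_def)

lemma lt_sub_less:
  assumes f: "f \<noteq> zero_blin" and "g \<noteq> zero_blin" and less: "mkey k (lt k g) < mkey k (lt k f)"
  shows "sub_blin f g \<noteq> zero_blin" and "lt k (sub_blin f g) = lt k f"
    and "sub_blin g f \<noteq> zero_blin" and "lt k (sub_blin g f) = lt k f"
proof -
  have g_lt: "mcoeff g (lt k f) = 0"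
    using mkey_le_lt[OF \<open>g \<noteq> zero_blin\<close>, of "lt k f" k] less by linarith
  then have nz: "mcoeff (sub_blin f g) (lt k f) \<noteq> 0" "mcoeff (sub_blin g f) (lt k f) \<noteq> 0"
    using mcoeff_lt_neq_0[OF f] by simp_all
  have le: "mkey k m \<le> mkey k (lt k f)" if "mcoeff f m \<noteq> mcoeff g m" for m
  proof (cases "mcoeff f m = 0")
    case True
    then show ?thesis
      using that mkey_le_lt[OF \<open>g \<noteq> zero_blin\<close>, of m k] less by simp
  qed (use mkey_le_lt[OF f] in blast)
  show "sub_blin f g \<noteq> zero_blin" "sub_blin g f \<noteq> zero_blin"
    using nz by (metis mcoeff_zero_blin)+
  show "lt k (sub_blin f g) = lt k f"
    by (rule lt_eqI[OF nz(1)], rule le) simp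
  show "lt k (sub_blin g f) = lt k f"
    by (rule lt_eqI[OF nz(2)], rule le) simp
qed

lemma lt_cancel:
  assumes "f \<noteq> zero_blin" and "g \<noteq> zero_blin" and "lt k f = m" and "lt k g = m"
    and h: "h = sub_blin f (scale_blin (mcoeff f m / mcoeff g m) g)" "h \<noteq> zero_blin"
  shows "mkey k (lt k h) < mkey k m"
proof -
  have "mcoeff g m \<noteq> 0"
    using mcoeff_lt_neq_0[OF assms(2), of k] assms(4) by simp
  then have "mcoeff h m = 0"
    using h(1) by simp
  then have "lt k h \<noteq> m"
    using mcoeff_lt_neq_0[OF h(2), of k] by auto
  moreover have "mcoeff f (lt k h) \<noteq> 0 \<or> mcoeff g (lt k h) \<noteq> 0"
    using mcoeff_lt_neq_0[OF h(2), of k] h(1) by auto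
  then have "mkey k (lt k h) \<le> mkey k m"
    using mkey_le_lt[OF assms(1), of "lt k h" k] mkey_le_lt[OF assms(2), of "lt k h" k] assms(3,4)
    by auto
  ultimately show ?thesis
    using mkey_inj le_neq_implies_less by blast
qed

lemma degw_eq_mkey_lt_div_2:
  assumes "f \<noteq> zero_blin"
  shows "degw k f = mkey k (lt k f) div 2"
proof -
  have "2 * degree (fst f) \<le> mkey k (lt k f)" if "fst f \<noteq> 0"
    using mkey_le_lt[OF assms, of "MX (degree (fst f))" k] that by simp
  moreover have "2 * (k - 1 + degree (snd f)) + 1 \<le> mkey k (lt k f)" if "snd f \<noteq> 0"
    using mkey_le_lt[OF assms, of "MY (degree (snd f))" k] that by simp
  ultimately have "2 * degw k f \<le> mkey k (lt k f)"
    unfolding degw_def by (auto simp: max_def)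
  moreover have "mkey k (lt k f) \<le> 2 * degw k f + 1"
  proof (cases "lt k f")
    case (MX a)
    then have "coeff (fst f) a \<noteq> 0"
      using mcoeff_lt_neq_0[OF assms, of k] by simp
    then show ?thesis
      using MX le_degree[of "fst f" a] by (auto simp: degw_def max_def)
  next
    case (MY b)
    then have "coeff (snd f) b \<noteq> 0"
      using mcoeff_lt_neq_0[OF assms, of k] by simp
    then show ?thesis
      using MY le_degree[of "snd f" b] by (auto simp: degw_def max_def)
  qed
  ultimately show ?thesis
    by linarith
qed

lemma degw_le_iff_mkey_lt_less:
  assumes "f0 \<noteq> zero_blin" "f1 \<noteq> zero_blin" and "is_MX (lt k f0)" "\<not> is_MX (lt k f1)"
  shows "degw k f0 \<le> degw k f1 \<longleftrightarrow> mkey k (lt k f0) < mkey k (lt k f1)"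
  using assms by (cases "lt k f0"; cases "lt k f1") (auto simp: degw_eq_mkey_lt_div_2)

section \<open>Minimality within a class of leading monomials\<close>

text \<open>x- and y-minimality are the cases \<open>b = True\<close> and \<open>b = False\<close> of one notion, so that
  each argument below is carried out once for both classes.\<close>
definition class_minimal :: "nat \<Rightarrow> nat \<Rightarrow> bool \<Rightarrow> ('a::field \<times> 'a) set \<Rightarrow> 'a blin \<Rightarrow> bool" where
  "class_minimal q k b P f \<longleftrightarrow> f \<noteq> zero_blin \<and> vanishes_on q f P \<and> is_MX (lt k f) = b \<and>
     (\<forall>g. g \<noteq> zero_blin \<and> vanishes_on q g P \<and> is_MX (lt k g) = b
          \<longrightarrow> mkey k (lt k f) \<le> mkey k (lt k g))"

lemma x_minimal_iff_class_minimal: "x_minimal q k P f \<longleftrightarrow> class_minimal q k True P f"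
proof -
  have "(\<exists>d. m = MX d) \<longleftrightarrow> is_MX m" for m
    by (cases m) simp_all
  then show ?thesis
    unfolding x_minimal_def class_minimal_def by (simp add: not_less)
qed

lemma y_minimal_iff_class_minimal: "y_minimal q k P f \<longleftrightarrow> class_minimal q k False P f"
proof -
  have "(\<exists>d. m = MY d) \<longleftrightarrow> \<not> is_MX m" for m
    by (cases m) simp_all
  then show ?thesis
    unfolding y_minimal_def class_minimal_def by (simp add: not_less)
qed

lemma class_minimal_insert:
  "class_minimal q k b S f \<Longrightarrow> eval_blin q f p = 0 \<Longrightarrow> class_minimal q k b (insert p S) f"
  unfolding class_minimal_def vanishes_on_def by simp

lemma class_minimal_same_lt:
  assumes "class_minimal q k b S f" and "g \<noteq> zero_blin" and "lt k g = lt k f"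
    and "vanishes_on q g (insert p S)"
  shows "class_minimal q k b (insert p S) g"
  using assms unfolding class_minimal_def vanishes_on_def by auto

lemma mkey_lt_le_if_class_minimal_smaller:
  assumes f: "class_minimal q k b S f" and g: "class_minimal q k (\<not> b) S g"
    and less: "mkey k (lt k f) < mkey k (lt k g)"
    and h: "h \<noteq> zero_blin" "vanishes_on q h S"
  shows "mkey k (lt k f) \<le> mkey k (lt k h)"
proof (cases "is_MX (lt k h) = b")
  case False
  then have "mkey k (lt k g) \<le> mkey k (lt k h)"
    using g h unfolding class_minimal_def by blast
  then show ?thesis
    using less by simp
qed (use f h in \<open>unfold class_minimal_def, blast\<close>)

section \<open>Spans over \<open>\<bbbF>\<^sub>q\<close>\<close>

definition Fq_span :: "nat \<Rightarrow> ('a::field \<times> 'a) list \<Rightarrow> ('a \<times> 'a) set" where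
  "Fq_span q xs = {(\<Sum>i<length xs. c i * fst (xs ! i), \<Sum>i<length xs. c i * snd (xs ! i)) | c.
     \<forall>i<length xs. c i ^ q = c i}"

lemma sum_snoc_nth:
  "(\<Sum>i<length (xs @ [p]). c i * g ((xs @ [p]) ! i)) =
     (\<Sum>i<length xs. c i * g (xs ! i)) + c (length xs) * (g p :: 'a::comm_ring)"
  by (simp add: nth_append)

lemma Fq_span_Nil: "Fq_span q [] = {(0, 0)}"
  by (simp add: Fq_span_def)

lemma Fq_span_snoc:
  assumes "c ^ q = c" and "(fst P - c * fst p, snd P - c * snd p) \<in> Fq_span q xs"
  shows "P \<in> Fq_span q (xs @ [p])"
proof -
  obtain d where d: "\<forall>i<length xs. d i ^ q = d i"
    "fst P - c * fst p = (\<Sum>i<length xs. d i * fst (xs ! i))"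
    "snd P - c * snd p = (\<Sum>i<length xs. d i * snd (xs ! i))"
    using assms(2) unfolding Fq_span_def by auto
  define d' where "d' = d(length xs := c)"
  have "(\<Sum>i<length (xs @ [p]). d' i * g ((xs @ [p]) ! i)) = (\<Sum>i<length xs. d i * g (xs ! i)) + c * g p"
    for g :: "'a \<times> 'a \<Rightarrow> 'a"
    unfolding sum_snoc_nth by (simp add: d'_def)
  then have "P = (\<Sum>i<length (xs @ [p]). d' i * fst ((xs @ [p]) ! i),
      \<Sum>i<length (xs @ [p]). d' i * snd ((xs @ [p]) ! i))"
    using d(2,3) by (simp add: prod_eq_iff diff_eq_eq)
  moreover have "\<forall>i<length (xs @ [p]). d' i ^ q = d' i"
    using d(1) assms(1) by (simp add: d'_def less_Suc_eq)
  ultimately show ?thesis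
    unfolding Fq_span_def by blast
qed

lemma lin_indep_Fq_snoc_notin_span:
  fixes xs :: "('a::field \<times> 'a) list"
  assumes "lin_indep_Fq q (xs @ [p])" and "(-1 :: 'a) ^ q = -1"
  shows "p \<notin> Fq_span q xs"
proof
  assume "p \<in> Fq_span q xs"
  then obtain d where d: "\<forall>i<length xs. d i ^ q = d i"
    "fst p = (\<Sum>i<length xs. d i * fst (xs ! i))" "snd p = (\<Sum>i<length xs. d i * snd (xs ! i))"
    unfolding Fq_span_def by auto
  define d' where "d' = d(length xs := -1)"
  have sum_d': "(\<Sum>i<length (xs @ [p]). d' i * g ((xs @ [p]) ! i)) = (\<Sum>i<length xs. d i * g (xs ! i)) - g p"
    for g :: "'a \<times> 'a \<Rightarrow> 'a"
    unfolding sum_snoc_nth by (simp add: d'_def)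
  have "(\<Sum>i<length (xs @ [p]). d' i * fst ((xs @ [p]) ! i)) = 0"
    "(\<Sum>i<length (xs @ [p]). d' i * snd ((xs @ [p]) ! i)) = 0"
    unfolding sum_d' using d(2,3) by simp_all
  moreover have "\<forall>i<length (xs @ [p]). d' i ^ q = d' i"
    using d(1) assms(2) by (simp add: d'_def less_Suc_eq)
  ultimately have "\<forall>i<length (xs @ [p]). d' i = 0"
    using assms(1) unfolding lin_indep_Fq_def by blast
  then have "d' (length xs) = 0"
    by simp
  then show False
    by (simp add: d'_def)
qed

lemma lin_indep_Fq_snocD:
  assumes "0 < q" and "lin_indep_Fq q (xs @ [p])"
  shows "lin_indep_Fq q xs"
  unfolding lin_indep_Fq_def
proof (intro allI impI)
  fix c :: "nat \<Rightarrow> 'a" and i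
  assume c: "(\<forall>i<length xs. c i ^ q = c i) \<and> (\<Sum>i<length xs. c i * fst (xs ! i)) = 0 \<and>
      (\<Sum>i<length xs. c i * snd (xs ! i)) = 0" and i: "i < length xs"
  define c' where "c' = c(length xs := 0)"
  have "(\<Sum>i<length (xs @ [p]). c' i * g ((xs @ [p]) ! i)) = (\<Sum>i<length xs. c i * g (xs ! i))"
    for g :: "'a \<times> 'a \<Rightarrow> 'a"
    unfolding sum_snoc_nth by (simp add: c'_def)
  moreover have "\<forall>i<length (xs @ [p]). c' i ^ q = c' i"
    using c assms(1) by (simp add: c'_def less_Suc_eq)
  ultimately have "\<forall>i<length (xs @ [p]). c' i = 0"
    using assms(2) c unfolding lin_indep_Fq_def by simp
  then have "c' i = 0"
    using i by simp
  then show "c i = 0"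
    using i by (simp add: c'_def)
qed

section \<open>The algorithm\<close>

definition frob_update :: "nat \<Rightarrow> 'a::field \<Rightarrow> 'a blin \<Rightarrow> 'a blin" where
  "frob_update q d f = sub_blin (frob_blin q f) (scale_blin (d ^ (q - 1)) f)"

lemma alg_step_cases:
  assumes "eval_blin q f0 p = d0" and "eval_blin q f1 p = d1"
  obtains "d0 = 0" "alg_step q k (f0, f1) p = (f0, frob_update q d1 f1)"
  | "d0 \<noteq> 0" "d1 = 0" "alg_step q k (f0, f1) p = (frob_update q d0 f0, f1)"
  | "d0 \<noteq> 0" "d1 \<noteq> 0" "degw k f0 \<le> degw k f1"
    "alg_step q k (f0, f1) p = (frob_update q d0 f0, sub_blin (scale_blin d1 f0) (scale_blin d0 f1))"
  | "d0 \<noteq> 0" "d1 \<noteq> 0" "\<not> degw k f0 \<le> degw k f1"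
    "alg_step q k (f0, f1) p = (sub_blin (scale_blin d1 f0) (scale_blin d0 f1), frob_update q d1 f1)"
  using assms by (auto simp: alg_step_def frob_update_def Let_def)

definition alg_invariant :: "nat \<Rightarrow> nat \<Rightarrow> ('a::field \<times> 'a) list \<Rightarrow> 'a blin \<times> 'a blin \<Rightarrow> bool" where
  "alg_invariant q k xs fs \<longleftrightarrow>
     class_minimal q k True (set xs) (fst fs) \<and> class_minimal q k False (set xs) (snd fs) \<and>
     (\<forall>P. eval_blin q (fst fs) P = 0 \<and> eval_blin q (snd fs) P = 0 \<longrightarrow> P \<in> Fq_span q xs)"

lemma alg_invariant_Nil: "alg_invariant q k [] ((([:1:], 0), (0, [:1:])) :: 'a::field blin \<times> 'a blin)"
proof -
  have lt_x: "lt k (([:1:], 0) :: 'a blin) = MX 0"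
  proof (rule lt_eqI)
    fix m assume "mcoeff (([:1:], 0) :: 'a blin) m \<noteq> 0"
    then show "mkey k m \<le> mkey k (MX 0)"
      by (cases m) (auto simp: coeff_pCons split: nat.splits)
  qed simp
  have lt_y: "lt k ((0, [:1:]) :: 'a blin) = MY 0"
  proof (rule lt_eqI)
    fix m assume "mcoeff ((0, [:1:]) :: 'a blin) m \<noteq> 0"
    then show "mkey k m \<le> mkey k (MY 0)"
      by (cases m) (auto simp: coeff_pCons split: nat.splits)
  qed simp
  have "class_minimal q k True {} (([:1:], 0) :: 'a blin)"
    using lt_x by (simp add: class_minimal_def zero_blin_def vanishes_on_def)
  moreover have "class_minimal q k False {} ((0, [:1:]) :: 'a blin)"
    using lt_y by (auto simp: class_minimal_def zero_blin_def vanishes_on_def elim!: is_MX.elims)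
  moreover have "eval_blin q (([:1:], 0) :: 'a blin) P = fst P" "eval_blin q ((0, [:1:]) :: 'a blin) P = snd P"
    for P
    by (simp_all add: eval_blin_def eval_lin_def)
  ultimately show ?thesis
    unfolding alg_invariant_def by (simp add: Fq_span_Nil prod_eq_iff)
qed

context
  fixes q :: nat
  assumes frob_add: "\<And>x y :: 'a::field. (x + y) ^ q = x ^ q + y ^ q"
begin

lemma q_pos: "0 < q"
proof -
  have "(0::'a) ^ q = 0 ^ q + 0 ^ q"
    using frob_add[of 0 0] by simp
  then have "(0::'a) ^ q = 0"
    by (metis add_cancel_right_right)
  then show ?thesis
    by (cases q) simp_all
qed

lemma frob_diff: "(x - y :: 'a) ^ q = x ^ q - y ^ q"
  using frob_add[of "x - y" y] by simp

lemma frob_pow_diff: "(x - y :: 'a) ^ (q ^ j) = x ^ (q ^ j) - y ^ (q ^ j)"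
proof (induction j)
  case (Suc j)
  then show ?case
    by (simp only: power_Suc power_mult_power frob_diff)
qed simp

lemma frob_sum: "(sum f A) ^ q = (\<Sum>i\<in>A. (f i :: 'a) ^ q)"
  by (induction A rule: infinite_finite_induct) (simp_all add: frob_add q_pos)

lemma frob_neg_one: "(-1 :: 'a) ^ q = -1"
proof -
  have "1 + (-1 :: 'a) ^ q = 0"
    using frob_add[of 1 "-1"] q_pos by (simp add: zero_power)
  then show ?thesis
    by (metis add.commute eq_neg_iff_add_eq_0)
qed

lemma frob_pow_fixed: "(c :: 'a) ^ q = c \<Longrightarrow> c ^ (q ^ j) = c"
  by (induction j) (simp_all add: power_mult mult.commute)

lemma coeff_frob_lin: "coeff (frob_lin q p) i = (if i = 0 then 0 else (coeff p (i - 1) :: 'a) ^ q)"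
  using q_pos by (cases i) (simp_all add: frob_lin_def coeff_map_poly)

lemma eval_lin_frob: "eval_lin q (frob_lin q p) a = (eval_lin q p a :: 'a) ^ q"
proof -
  have "degree (frob_lin q p) \<le> Suc (degree p)"
    unfolding frob_lin_def using degree_pCons_le[of 0] degree_map_poly[of "\<lambda>a. a ^ q" p] q_pos
    by (simp add: zero_power)
  then have "eval_lin q (frob_lin q p) a = (\<Sum>i\<le>Suc (degree p). coeff (frob_lin q p) i * a ^ (q ^ i))"
    by (rule eval_lin_eq_sum)
  also have "\<dots> = (\<Sum>i\<le>degree p. (coeff p i * a ^ (q ^ i)) ^ q)"
    by (subst sum.atMost_Suc_shift) (simp add: coeff_frob_lin power_mult_distrib power_mult_power)
  also have "\<dots> = (eval_lin q p a) ^ q"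
    by (simp add: eval_lin_def frob_sum)
  finally show ?thesis .
qed

lemma eval_lin_Fq_linear:
  assumes "c ^ q = c"
  shows "eval_lin q p (a - c * b) = eval_lin q p a - c * eval_lin q p (b :: 'a)"
proof -
  have "(a - c * b) ^ (q ^ i) = a ^ (q ^ i) - c * b ^ (q ^ i)" for i
    by (simp only: frob_pow_diff power_mult_distrib frob_pow_fixed[OF assms])
  then show ?thesis
    unfolding eval_lin_def
    by (simp add: right_diff_distrib sum_subtractf sum_distrib_left mult.left_commute)
qed

lemma eval_blin_frob: "eval_blin q (frob_blin q f) P = (eval_blin q f P :: 'a) ^ q"
  by (simp add: eval_blin_def frob_blin_def eval_lin_frob frob_add)

lemma eval_blin_frob_pow: "eval_blin q ((frob_blin q ^^ j) f) P = (eval_blin q f P :: 'a) ^ (q ^ j)"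
  by (induction j) (simp_all add: eval_blin_frob power_mult_power)

lemma eval_blin_Fq_linear:
  assumes "c ^ q = c"
  shows "eval_blin q f (fst P - c * fst p, snd P - c * snd p) =
    eval_blin q f P - c * eval_blin q f (p :: 'a \<times> 'a)"
  by (simp add: eval_blin_def eval_lin_Fq_linear[OF assms] algebra_simps)

lemma eval_blin_frob_update:
  "eval_blin q (frob_update q d f) P = (eval_blin q f P :: 'a) ^ q - d ^ (q - 1) * eval_blin q f P"
  by (simp add: frob_update_def eval_blin_sub eval_blin_scale eval_blin_frob)

lemma eval_blin_frob_update_self: "eval_blin q (frob_update q (eval_blin q f p) f) (p :: 'a \<times> 'a) = 0"
  using q_pos by (simp add: eval_blin_frob_update flip: power_Suc power_Suc2)

lemma frob_update_root:
  assumes "d \<noteq> 0" and "eval_blin q (frob_update q d f) P = 0"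
  obtains c :: 'a where "c ^ q = c" and "eval_blin q f P = c * d"
proof
  let ?t = "eval_blin q f P"
  have "?t ^ q = d ^ (q - 1) * ?t"
    using assms(2) by (simp add: eval_blin_frob_update)
  then have "(?t / d) ^ q = d ^ (q - 1) * ?t / (d ^ (q - 1) * d)"
    using q_pos by (simp add: power_divide flip: power_Suc2)
  then show "(?t / d) ^ q = ?t / d"
    using assms(1) by simp
  show "?t = ?t / d * d"
    using assms(1) by simp
qed

lemma mcoeff_frob_mshift: "mcoeff (frob_blin q f) (mshift m) = (mcoeff f m :: 'a) ^ q"
  by (cases m) (simp_all add: frob_blin_def coeff_frob_lin)

lemma mcoeff_frob_neq_0D:
  assumes "mcoeff (frob_blin q f) m \<noteq> (0 :: 'a)"
  obtains m' where "m = mshift m'" and "mcoeff f m' \<noteq> 0"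
proof (cases m)
  case (MX i)
  with assms have "i \<noteq> 0"
    by (auto simp: frob_blin_def coeff_frob_lin split: if_splits)
  with MX have "m = mshift (MX (i - 1))"
    by simp
  with assms show thesis
    using that q_pos by (metis mcoeff_frob_mshift zero_power)
next
  case (MY j)
  with assms have "j \<noteq> 0"
    by (auto simp: frob_blin_def coeff_frob_lin split: if_splits)
  with MY have "m = mshift (MY (j - 1))"
    by simp
  with assms show thesis
    using that q_pos by (metis mcoeff_frob_mshift zero_power)
qed

lemma lt_frob:
  assumes "(f :: 'a blin) \<noteq> zero_blin"
  shows "frob_blin q f \<noteq> zero_blin" and "lt k (frob_blin q f) = mshift (lt k f)"
proof -
  have nz: "mcoeff (frob_blin q f) (mshift (lt k f)) \<noteq> 0"
    using mcoeff_lt_neq_0[OF assms] by (simp add: mcoeff_frob_mshift)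
  then show "frob_blin q f \<noteq> zero_blin"
    by auto
  show "lt k (frob_blin q f) = mshift (lt k f)"
  proof (rule lt_eqI[OF nz])
    fix m assume "mcoeff (frob_blin q f) m \<noteq> 0"
    then obtain m' where "m = mshift m'" "mcoeff f m' \<noteq> 0"
      by (rule mcoeff_frob_neq_0D)
    then show "mkey k m \<le> mkey k (mshift (lt k f))"
      using mkey_le_lt[OF assms] by simp
  qed
qed

lemma lt_frob_pow:
  assumes "(f :: 'a blin) \<noteq> zero_blin"
  shows "(frob_blin q ^^ j) f \<noteq> zero_blin \<and> lt k ((frob_blin q ^^ j) f) = (mshift ^^ j) (lt k f)"
  by (induction j) (simp_all add: assms lt_frob)

lemma lt_frob_update:
  assumes "(f :: 'a blin) \<noteq> zero_blin" and "d \<noteq> 0"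
  shows "frob_update q d f \<noteq> zero_blin" and "lt k (frob_update q d f) = mshift (lt k f)"
proof -
  let ?g = "scale_blin (d ^ (q - 1)) f"
  have g: "?g \<noteq> zero_blin" and less: "mkey k (lt k ?g) < mkey k (lt k (frob_blin q f))"
    using assms by (simp_all add: scale_blin_eq_zero_iff lt_scale lt_frob)
  show "frob_update q d f \<noteq> zero_blin" "lt k (frob_update q d f) = mshift (lt k f)"
    unfolding frob_update_def using lt_sub_less(1,2)[OF lt_frob(1)[OF assms(1)] g less]
    by (simp_all add: lt_frob(2)[OF assms(1)])
qed

lemma mkey_lt_le_if_nonvanishing:
  assumes f: "class_minimal q k b S f" "eval_blin q f p = (0 :: 'a)"
    and g: "class_minimal q k (\<not> b) S g"
  shows "vanishes_on q h S \<Longrightarrow> eval_blin q h p \<noteq> 0 \<Longrightarrow> mkey k (lt k g) \<le> mkey k (lt k h)"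
  \<comment> \<open>Cancel leading monomials of class \<open>b\<close> by \<open>q\<close>-th powers of \<open>f\<close> until one of class \<open>\<not> b\<close> remains.\<close>
proof (induction "mkey k (lt k h)" arbitrary: h rule: less_induct)
  case less
  then have h: "h \<noteq> zero_blin"
    by auto
  show ?case
  proof (cases "is_MX (lt k h) = b")
    case False
    then show ?thesis
      using g h less.prems(1) unfolding class_minimal_def by blast
  next
    case True
    with f(1) h less.prems(1) have "mkey k (lt k f) \<le> mkey k (lt k h)" "is_MX (lt k f) = is_MX (lt k h)"
      unfolding class_minimal_def by blast+
    then obtain j where j: "(mshift ^^ j) (lt k f) = lt k h"
      using mshift_pow_reaches by metis
    define f' where "f' = (frob_blin q ^^ j) f"
    have f': "f' \<noteq> zero_blin" "lt k f' = lt k h"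
      using lt_frob_pow[of f j k] f(1) j unfolding f'_def class_minimal_def by auto
    define h' where "h' = sub_blin h (scale_blin (mcoeff h (lt k h) / mcoeff f' (lt k h)) f')"
    have "vanishes_on q f' S" "eval_blin q f' p = 0"
      using f q_pos unfolding f'_def class_minimal_def vanishes_on_def
      by (simp_all add: eval_blin_frob_pow zero_power)
    then have h': "vanishes_on q h' S" "eval_blin q h' p \<noteq> 0"
      using less.prems unfolding h'_def
      by (simp_all add: vanishes_on_sub vanishes_on_scale eval_blin_sub eval_blin_scale)
    then have "mkey k (lt k h') < mkey k (lt k h)"
      using lt_cancel[OF h f'(1) refl f'(2) h'_def] eval_zero_blin by metis
    then show ?thesis
      using less.hyps h' by fastforce
  qed
qed

lemma class_minimal_frob_update:
  assumes f: "class_minimal q k b S f" and d: "eval_blin q f p = d" "d \<noteq> (0 :: 'a)"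
    and lower: "\<And>h. vanishes_on q h S \<Longrightarrow> eval_blin q h p \<noteq> 0 \<Longrightarrow> mkey k (lt k f) \<le> mkey k (lt k h)"
  shows "class_minimal q k b (insert p S) (frob_update q d f)"
proof -
  let ?F = "frob_update q d f"
  have f0: "f \<noteq> zero_blin" and vf: "vanishes_on q f S" and cf: "is_MX (lt k f) = b"
    using f unfolding class_minimal_def by blast+
  have F: "?F \<noteq> zero_blin" "lt k ?F = mshift (lt k f)"
    using lt_frob_update f0 d(2) by blast+
  have vF: "vanishes_on q ?F (insert p S)"
    using vf d(1) eval_blin_frob_update_self[of f p] q_pos
    by (simp add: vanishes_on_def eval_blin_frob_update zero_power)
  have "mkey k (lt k ?F) \<le> mkey k (lt k g)"
    if g: "g \<noteq> zero_blin" "vanishes_on q g (insert p S)" "is_MX (lt k g) = b" for g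
  proof (rule ccontr)
    assume "\<not> ?thesis"
    then have "mkey k (lt k g) < mkey k (mshift (lt k f))"
      using F(2) by simp
    moreover have gS: "vanishes_on q g S" and gp: "eval_blin q g p = 0"
      using g(2) by (simp_all add: vanishes_on_def)
    then have "mkey k (lt k f) \<le> mkey k (lt k g)"
      using f g(1,3) unfolding class_minimal_def by blast
    ultimately have lt_g: "lt k g = lt k f"
      using same_class_eq_if_mkey_less_mshift g(3) cf by blast
    define h where "h = sub_blin g (scale_blin (mcoeff g (lt k f) / mcoeff f (lt k f)) f)"
    have "mcoeff g (lt k f) \<noteq> 0" "mcoeff f (lt k f) \<noteq> 0"
      using mcoeff_lt_neq_0 g(1) f0 lt_g by metis+
    then have hp: "eval_blin q h p \<noteq> 0"
      using gp d by (simp add: h_def eval_blin_sub eval_blin_scale)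
    moreover have hS: "vanishes_on q h S"
      unfolding h_def using gS vf by (simp add: vanishes_on_sub vanishes_on_scale)
    moreover have "mkey k (lt k h) < mkey k (lt k f)"
      using lt_cancel[OF g(1) f0 lt_g refl h_def] hp eval_zero_blin by metis
    ultimately show False
      using lower by fastforce
  qed
  then show ?thesis
    unfolding class_minimal_def using F vF cf by simp
qed

lemma class_minimal_step_one_vanishing:
  assumes f: "class_minimal q k b S f" and g: "class_minimal q k (\<not> b) S g"
    and d: "eval_blin q f p = d" "d \<noteq> (0 :: 'a)" and "eval_blin q g p = 0"
  shows "class_minimal q k b (insert p S) (frob_update q d f)"
    and "class_minimal q k (\<not> b) (insert p S) g"
proof -
  have "class_minimal q k (\<not> \<not> b) S f"
    using f by simp
  then show "class_minimal q k b (insert p S) (frob_update q d f)"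
    using class_minimal_frob_update[OF f d] mkey_lt_le_if_nonvanishing[OF g \<open>eval_blin q g p = 0\<close>]
    by blast
  show "class_minimal q k (\<not> b) (insert p S) g"
    using class_minimal_insert[OF g \<open>eval_blin q g p = 0\<close>] .
qed

lemma class_minimal_step_smaller:
  assumes f: "class_minimal q k b S f" and g: "class_minimal q k (\<not> b) S g"
    and less: "mkey k (lt k f) < mkey k (lt k g)"
    and d: "eval_blin q f p = d" "d \<noteq> (0 :: 'a)" and e: "eval_blin q g p = e" "e \<noteq> 0"
  shows "class_minimal q k b (insert p S) (frob_update q d f)"
    and "class_minimal q k (\<not> b) (insert p S) (sub_blin (scale_blin e f) (scale_blin d g))"
    and "class_minimal q k (\<not> b) (insert p S) (sub_blin (scale_blin d g) (scale_blin e f))"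
proof -
  have f0: "f \<noteq> zero_blin" and g0: "g \<noteq> zero_blin" and vf: "vanishes_on q f S" and vg: "vanishes_on q g S"
    using f g unfolding class_minimal_def by blast+
  show "class_minimal q k b (insert p S) (frob_update q d f)"
  proof (rule class_minimal_frob_update[OF f d])
    fix h assume "vanishes_on q h S" "eval_blin q h p \<noteq> 0"
    then show "mkey k (lt k f) \<le> mkey k (lt k h)"
      using mkey_lt_le_if_class_minimal_smaller[OF f g less] eval_zero_blin by metis
  qed
  have "scale_blin e f \<noteq> zero_blin" "scale_blin d g \<noteq> zero_blin"
    "mkey k (lt k (scale_blin e f)) < mkey k (lt k (scale_blin d g))"
    using f0 g0 d(2) e(2) less by (simp_all add: scale_blin_eq_zero_iff lt_scale)
  note lt_comb = lt_sub_less[OF this(2,1,3)]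
  have "vanishes_on q (sub_blin (scale_blin e f) (scale_blin d g)) (insert p S)"
    "vanishes_on q (sub_blin (scale_blin d g) (scale_blin e f)) (insert p S)"
    using vf vg d(1) e(1) by (simp_all add: vanishes_on_def eval_blin_sub eval_blin_scale)
  then show "class_minimal q k (\<not> b) (insert p S) (sub_blin (scale_blin e f) (scale_blin d g))"
    "class_minimal q k (\<not> b) (insert p S) (sub_blin (scale_blin d g) (scale_blin e f))"
    using class_minimal_same_lt[OF g] lt_comb d(2) by (simp_all add: lt_scale)
qed

lemma alg_step_class_minimal:
  assumes xm: "class_minimal q k True S f0" and ym: "class_minimal q k False S f1"
    and nz: "eval_blin q f0 p \<noteq> 0 \<or> eval_blin q f1 p \<noteq> (0 :: 'a)"
  shows "class_minimal q k True (insert p S) (fst (alg_step q k (f0, f1) p)) \<and>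
    class_minimal q k False (insert p S) (snd (alg_step q k (f0, f1) p))"
proof -
  obtain d0 d1 where d: "eval_blin q f0 p = d0" "eval_blin q f1 p = d1"
    by blast
  have deg: "degw k f0 \<le> degw k f1 \<longleftrightarrow> mkey k (lt k f0) < mkey k (lt k f1)"
    using xm ym by (intro degw_le_iff_mkey_lt_less) (simp_all add: class_minimal_def)
  from d show ?thesis
  proof (cases rule: alg_step_cases[where k = k])
    case 1
    then show ?thesis
      using class_minimal_step_one_vanishing[where b = False] xm ym d nz by simp
  next
    case 2
    then show ?thesis
      using class_minimal_step_one_vanishing[where b = True] xm ym d by simp
  next
    case 3
    then show ?thesis
      using class_minimal_step_smaller(1,2)[where b = True] xm ym d deg by simp
  next
    case 4
    have "lt k f0 \<noteq> lt k f1"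
      using xm ym unfolding class_minimal_def by auto
    then have "mkey k (lt k f0) \<noteq> mkey k (lt k f1)"
      using mkey_inj by blast
    moreover have "\<not> mkey k (lt k f0) < mkey k (lt k f1)"
      using 4 deg by simp
    ultimately have "mkey k (lt k f1) < mkey k (lt k f0)"
      by simp
    then show ?thesis
      using class_minimal_step_smaller(1,3)[where b = False] xm ym d 4 by simp
  qed
qed

lemma frob_update_common_zero:
  assumes "d \<noteq> 0" and "eval_blin q (frob_update q d f) P = 0"
    and "e * eval_blin q f P = d * eval_blin q g (P :: 'a \<times> 'a)"
  shows "\<exists>c. c ^ q = c \<and> eval_blin q f P = c * d \<and> eval_blin q g P = c * e"
proof -
  obtain c where c: "c ^ q = c" "eval_blin q f P = c * d"
    using frob_update_root[OF assms(1,2)] .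
  with assms(1,3) have "eval_blin q g P = c * e"
    by (simp add: mult.left_commute)
  with c show ?thesis
    by blast
qed

lemma alg_step_common_zero:
  assumes zeros: "\<And>P. eval_blin q f0 P = 0 \<Longrightarrow> eval_blin q f1 P = 0 \<Longrightarrow> P \<in> Fq_span q xs"
    and nz: "eval_blin q f0 p \<noteq> 0 \<or> eval_blin q f1 p \<noteq> (0 :: 'a)"
    and P: "eval_blin q (fst (alg_step q k (f0, f1) p)) P = 0"
      "eval_blin q (snd (alg_step q k (f0, f1) p)) P = 0"
  shows "P \<in> Fq_span q (xs @ [p])"
proof -
  obtain d0 d1 where d: "eval_blin q f0 p = d0" "eval_blin q f1 p = d1"
    by blast
  have "\<exists>c. c ^ q = c \<and> eval_blin q f0 P = c * d0 \<and> eval_blin q f1 P = c * d1"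
    using d
  proof (cases rule: alg_step_cases[where k = k])
    case 1
    then show ?thesis
      using frob_update_common_zero[of d1 f1 P d0 f0] P nz d by auto
  next
    case 2
    then show ?thesis
      using frob_update_common_zero[of d0 f0 P d1 f1] P by auto
  next
    case 3
    then show ?thesis
      using frob_update_common_zero[of d0 f0 P d1 f1] P by (simp add: eval_blin_sub eval_blin_scale)
  next
    case 4
    then show ?thesis
      using frob_update_common_zero[of d1 f1 P d0 f0] P
      by (auto simp: eval_blin_sub eval_blin_scale)
  qed
  then obtain c where c: "c ^ q = c" "eval_blin q f0 P = c * d0" "eval_blin q f1 P = c * d1"
    by blast
  show ?thesis
  proof (rule Fq_span_snoc[OF c(1)])
    show "(fst P - c * fst p, snd P - c * snd p) \<in> Fq_span q xs"
      by (rule zeros) (simp_all add: eval_blin_Fq_linear c d)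
  qed
qed

lemma alg_invariant_snoc:
  assumes inv: "alg_invariant q k xs (fs :: 'a blin \<times> 'a blin)" and p: "p \<notin> Fq_span q xs"
  shows "alg_invariant q k (xs @ [p]) (alg_step q k fs p)"
proof -
  obtain f0 f1 where fs: "fs = (f0, f1)"
    by (cases fs)
  have zeros: "\<And>P. eval_blin q f0 P = 0 \<Longrightarrow> eval_blin q f1 P = 0 \<Longrightarrow> P \<in> Fq_span q xs"
    using inv fs unfolding alg_invariant_def by auto
  with p have nz: "eval_blin q f0 p \<noteq> 0 \<or> eval_blin q f1 p \<noteq> 0"
    by blast
  have "P \<in> Fq_span q (xs @ [p])"
    if "eval_blin q (fst (alg_step q k fs p)) P = 0" "eval_blin q (snd (alg_step q k fs p)) P = 0" for P
    using alg_step_common_zero[OF zeros nz] that fs by simp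
  then show ?thesis
    using inv alg_step_class_minimal[OF _ _ nz] fs unfolding alg_invariant_def by simp
qed

lemma run_alg_invariant:
  "lin_indep_Fq q pts \<Longrightarrow> alg_invariant q k pts (run_alg q k (pts :: ('a \<times> 'a) list))"
proof (induction pts rule: rev_induct)
  case Nil
  then show ?case
    using alg_invariant_Nil by (simp add: run_alg_def)
next
  case (snoc p xs)
  have "run_alg q k (xs @ [p]) = alg_step q k (run_alg q k xs) p"
    by (simp add: run_alg_def)
  then show ?case
    using alg_invariant_snoc snoc lin_indep_Fq_snocD[OF q_pos] lin_indep_Fq_snoc_notin_span[OF _ frob_neg_one]
    by metis
qed

end

theorem theorem16:
  fixes q m k :: nat and pts :: "('a::{finite,field} \<times> 'a) list"
  assumes "\<exists>p n. prime p \<and> n > 0 \<and> q = p ^ n"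
    and "m \<ge> 1"
    and "card (UNIV :: 'a set) = q ^ m"
    and "k \<ge> 1"
    and "lin_indep_Fq q pts"
  shows "x_minimal q k (set pts) (fst (run_alg q k pts)) \<and>
         y_minimal q k (set pts) (snd (run_alg q k pts))"
proof -
  obtain p n where p: "prime p" and q: "q = p ^ n"
    using assms(1) by blast
  then have "CHAR('a) = p"
    using CHAR_eq_if_card_prime_power assms(3) by (metis power_mult)
  then have "(x + y) ^ q = x ^ q + y ^ q" for x y :: 'a
    using freshmans_dream' p q by blast
  then have "alg_invariant q k pts (run_alg q k pts)"
    using run_alg_invariant assms(5) by blast
  then show ?thesis
    by (simp add: alg_invariant_def x_minimal_iff_class_minimal y_minimal_iff_class_minimal)
qed

end
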